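(* Let $\alpha,\beta,\gamma_1,\gamma_2,x$ be real numbers, $\lambda_1,\lambda_2$ nonnegative integers and $n$ a nonnegative integer. Then $$\sum_{k=0}^{n}\binom{n}{k}A_{k}^{\lambda_{1},x}(\alpha,\beta,\alpha+\beta+\gamma_{1})\,A_{n-k}^{\lambda_{2},x}(\alpha,\beta,\gamma_{2})=A_{n}^{\lambda_{1}+\lambda_{2},x}(\alpha,\beta,\alpha+\beta+\gamma_{1}+\gamma_{2}).$$
   Context: For a number $t$ and $\alpha$, the generalised factorial is $(t|\alpha)_n=\prod_{j=0}^{n-1}(t-j\alpha)$ for $n\ge 1$ and $(t|\alpha)_0=1$. For parameters $\alpha,\beta,\gamma$, the generalised Stirling numbers $S(n,k,\alpha,\beta,\gamma)$ ($0\le k\le n$) are defined by the polynomial identity $(t|\alpha)_n=\sum_{k=0}^{n}S(n,k,\alpha,\beta,\gamma)\,(t-\gamma|\beta)_k$ in the variable $t$. For a nonnegative integer $\lambda$ put $\binom{k+\lambda-1}{k}=\lambda(\lambda+1)\cdots(\lambda+k-1)/k!$ (equal to $1$ for $k=0$). Define $$A^{\lambda,x}_n(\alpha,\beta,\gamma)=\sum_{k=0}^{n}\binom{k+\lambda-1}{k}(-1)^{n+k}\beta^k k!\,S(n,k,\alpha,-\beta,-\gamma)\,x^k .$$ *)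

theory Defs
  imports Complex_Main
begin

definition gfact :: "real \<Rightarrow> real \<Rightarrow> nat \<Rightarrow> real" where
  "gfact t a n = (\<Prod>j<n. (t - of_nat j * a))"

text \<open>Generalised Stirling numbers S(n,k,alpha,beta,gamma): the unique coefficients
  with (t|alpha)_n = sum_{k=0}^n S(n,k) (t-gamma|beta)_k as polynomial identity in t.
  (The (t-gamma|beta)_k are monic of degree k, so the coefficients are unique.)\<close>
definition gstirling :: "nat \<Rightarrow> nat \<Rightarrow> real \<Rightarrow> real \<Rightarrow> real \<Rightarrow> real" where
  "gstirling n k a b g =
     (THE c :: nat \<Rightarrow> real. (\<forall>i>n. c i = 0) \<and>
        (\<forall>t. gfact t a n = (\<Sum>i\<le>n. c i * gfact (t - g) b i))) k"

text \<open>binom(k+lambda-1,k) = lambda(lambda+1)...(lambda+k-1)/k!\<close>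
definition nbinom :: "nat \<Rightarrow> nat \<Rightarrow> real" where
  "nbinom lam k = pochhammer (real lam) k / fact k"

definition Apoly :: "nat \<Rightarrow> real \<Rightarrow> nat \<Rightarrow> real \<Rightarrow> real \<Rightarrow> real \<Rightarrow> real" where
  "Apoly lam x n a b g =
     (\<Sum>k\<le>n. nbinom lam k * (-1) ^ (n + k) * b ^ k * fact k
              * gstirling n k a (- b) (- g) * x ^ k)"

end

(* Expanding (s + t|a)_n once by the binomial theorem for generalised factorials and once
   directly, both in the product basis (s - g1|B)_i (t - g2|B)_j, gives the convolution
   binom(i+j, i) S(n, i+j; g1 + g2) = sum_k binom(n, k) S(k, i; g1) S(n-k, j; g2).
   Writing A_n = (-1)^n sum_k (lambda)_k (-b x)^k S(n, k, a, -b, -g), where the rising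
   factorials (lambda)_k are of binomial type in lambda, the theorem follows by reindexing.
   The identity holds for every shift of the first Stirling parameter. *)

theory Submission
  imports Defs "HOL-Computational_Algebra.Polynomial"
begin

lemma gfact_0 [simp]: "gfact t a 0 = 1"
  by (simp add: gfact_def)

lemma gfact_Suc: "gfact t a (Suc n) = gfact t a n * (t - of_nat n * a)"
  by (simp add: gfact_def)

lemma gfact_mult_linear:
  "gfact (t - G) B k * (t - c) = gfact (t - G) B (Suc k) + (G + of_nat k * B - c) * gfact (t - G) B k"
  by (simp add: gfact_Suc algebra_simps)

definition gfact_poly :: "real \<Rightarrow> nat \<Rightarrow> real poly" where
  "gfact_poly B k = (\<Prod>j<k. [:- of_nat j * B, 1:])"

lemma poly_gfact_poly: "poly (gfact_poly B k) t = gfact t B k"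
  by (simp add: gfact_poly_def gfact_def poly_prod)

lemma degree_gfact_poly: "degree (gfact_poly B k) = k"
  unfolding gfact_poly_def by (subst degree_prod_eq_sum_degree) auto

lemma lead_coeff_gfact_poly: "lead_coeff (gfact_poly B k) = 1"
  unfolding gfact_poly_def lead_coeff_prod by simp

lemma gfact_poly_independent:
  assumes "(\<Sum>i\<le>N. smult (c i) (gfact_poly B i)) = 0" and "i \<le> N"
  shows "c i = 0"
  using assms
proof (induction N)
  case 0
  then show ?case by (simp add: gfact_poly_def)
next
  case (Suc N)
  have "coeff (\<Sum>i\<le>Suc N. smult (c i) (gfact_poly B i)) (Suc N) = c (Suc N)"
    using degree_gfact_poly[of B] lead_coeff_gfact_poly[of B]
    by (simp add: coeff_sum coeff_eq_0)
  then have "c (Suc N) = 0"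
    unfolding Suc.prems(1) by simp
  moreover from this have "(\<Sum>i\<le>N. smult (c i) (gfact_poly B i)) = 0"
    using Suc.prems(1) by simp
  ultimately show ?case
    using Suc.IH Suc.prems(2) le_Suc_eq by blast
qed

lemma gfact_basis_coeffs_unique:
  assumes "\<And>t. (\<Sum>i\<le>N. c i * gfact (t - G) B i) = (\<Sum>i\<le>N. d i * gfact (t - G) B i)"
    and "i \<le> N"
  shows "c i = d i"
proof -
  have "poly (\<Sum>i\<le>N. smult (c i - d i) (gfact_poly B i)) t = 0" for t
    using assms(1)[of "t + G"]
    by (simp add: poly_sum poly_gfact_poly left_diff_distrib sum_subtractf)
  then have "(\<Sum>i\<le>N. smult (c i - d i) (gfact_poly B i)) = 0"
    using poly_all_0_iff_0 by blast
  then show ?thesis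
    using gfact_poly_independent assms(2) by fastforce
qed

lemma gfact_expansion_exists:
  "\<exists>c. (\<forall>k>n. c k = 0) \<and> (\<forall>t. gfact t a n = (\<Sum>k\<le>n. c k * gfact (t - G) B k))"
proof (induction n)
  case 0
  show ?case
    by (rule exI[of _ "\<lambda>k. if k = 0 then 1 else 0"]) simp
next
  case (Suc n)
  then obtain c where c_vanish: "\<forall>k>n. c k = 0"
    and c_expansion: "\<forall>t. gfact t a n = (\<Sum>k\<le>n. c k * gfact (t - G) B k)"
    by blast
  define e where "e k = G + of_nat k * B - of_nat n * a" for k
  define d where "d k = (if k = 0 then 0 else c (k - 1)) + e k * c k" for k
  have "gfact t a (Suc n) = (\<Sum>k\<le>Suc n. d k * gfact (t - G) B k)" for t
  proof -
    have shift: "(\<Sum>k\<le>Suc n. (if k = 0 then 0 else c (k - 1)) * gfact (t - G) B k)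
        = (\<Sum>k\<le>n. c k * gfact (t - G) B (Suc k))"
      by (subst sum.atMost_Suc_shift) simp
    have "(\<Sum>k\<le>Suc n. d k * gfact (t - G) B k)
        = (\<Sum>k\<le>n. c k * gfact (t - G) B (Suc k)) + (\<Sum>k\<le>Suc n. e k * c k * gfact (t - G) B k)"
      by (simp only: d_def distrib_right sum.distrib shift)
    also have "\<dots> = (\<Sum>k\<le>n. c k * (gfact (t - G) B (Suc k) + e k * gfact (t - G) B k))"
      using c_vanish by (simp add: sum.distrib distrib_left mult.assoc mult.left_commute)
    also have "\<dots> = (\<Sum>k\<le>n. c k * gfact (t - G) B k) * (t - of_nat n * a)"
      unfolding e_def gfact_mult_linear[symmetric] sum_distrib_right by (simp only: mult.assoc)
    also have "\<dots> = gfact t a (Suc n)"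
      by (simp only: gfact_Suc c_expansion)
    finally show ?thesis ..
  qed
  moreover have "\<forall>k>Suc n. d k = 0"
    using c_vanish by (simp add: d_def)
  ultimately show ?case
    by blast
qed

lemma gfact_expansion_unique:
  "\<exists>!c. (\<forall>k>n. c k = 0) \<and> (\<forall>t. gfact t a n = (\<Sum>k\<le>n. c k * gfact (t - G) B k))"
proof (rule ex_ex1I)
  show "\<exists>c. (\<forall>k>n. c k = 0) \<and> (\<forall>t. gfact t a n = (\<Sum>k\<le>n. c k * gfact (t - G) B k))"
    by (rule gfact_expansion_exists)
next
  fix c d
  assume c: "(\<forall>k>n. c k = 0) \<and> (\<forall>t. gfact t a n = (\<Sum>k\<le>n. c k * gfact (t - G) B k))"
    and d: "(\<forall>k>n. d k = 0) \<and> (\<forall>t. gfact t a n = (\<Sum>k\<le>n. d k * gfact (t - G) B k))"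
  have "c k = d k" for k
  proof (cases "k \<le> n")
    case True
    moreover have "(\<Sum>k\<le>n. c k * gfact (t - G) B k) = (\<Sum>k\<le>n. d k * gfact (t - G) B k)" for t
      using c d by metis
    ultimately show ?thesis
      by (rule gfact_basis_coeffs_unique[where N=n, rotated])
  next
    case False
    then show ?thesis
      using c d by auto
  qed
  then show "c = d" ..
qed

lemma gstirling_spec:
  "(\<forall>k>n. gstirling n k a B G = 0) \<and>
   (\<forall>t. gfact t a n = (\<Sum>k\<le>n. gstirling n k a B G * gfact (t - G) B k))"
  unfolding gstirling_def by (rule theI'[OF gfact_expansion_unique])

lemma gstirling_eq_0: "n < k \<Longrightarrow> gstirling n k a B G = 0"
  using gstirling_spec by blast

lemma gfact_eq_sum_gstirling:
  assumes "n \<le> N"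
  shows "gfact t a n = (\<Sum>k\<le>N. gstirling n k a B G * gfact (t - G) B k)"
proof -
  have "gfact t a n = (\<Sum>k\<le>n. gstirling n k a B G * gfact (t - G) B k)"
    using gstirling_spec by blast
  also have "\<dots> = (\<Sum>k\<le>N. gstirling n k a B G * gfact (t - G) B k)"
    by (rule sum.mono_neutral_left) (use assms gstirling_eq_0 in auto)
  finally show ?thesis .
qed

lemma gfact_eq_pochhammer:
  assumes "a \<noteq> 0"
  shows "gfact t a n = (- a) ^ n * pochhammer (- t / a) n"
proof -
  have "gfact t a n = (\<Prod>j<n. (- a) * (- t / a + of_nat j))"
    unfolding gfact_def by (rule prod.cong) (use assms in \<open>auto simp: field_simps\<close>)
  then show ?thesis
    by (simp only: prod.distrib pochhammer_prod atLeast0LessThan prod_constant card_lessThan)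
qed

lemma gfact_add:
  "gfact (s + t) a n = (\<Sum>k\<le>n. real (n choose k) * gfact s a k * gfact t a (n - k))"
proof (cases "a = 0")
  case True
  then show ?thesis
    by (simp add: gfact_def binomial_ring)
next
  case False
  have "gfact (s + t) a n = (- a) ^ n * pochhammer (- s / a + - t / a) n"
    using False by (simp add: gfact_eq_pochhammer add_divide_distrib diff_divide_distrib)
  also have "\<dots> = (\<Sum>k\<le>n. real (n choose k) * ((- a) ^ k * pochhammer (- s / a) k)
                            * ((- a) ^ (n - k) * pochhammer (- t / a) (n - k)))"
    unfolding pochhammer_binomial_sum sum_distrib_left
    by (intro sum.cong refl) (simp add: power_add[symmetric] mult_ac)
  also have "\<dots> = (\<Sum>k\<le>n. real (n choose k) * gfact s a k * gfact t a (n - k))"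
    using False by (simp add: gfact_eq_pochhammer)
  finally show ?thesis .
qed

lemma sum_atMost_square_eq_sum_diagonals:
  fixes F :: "nat \<Rightarrow> nat \<Rightarrow> 'a::comm_monoid_add"
  assumes "\<And>i j. n < i + j \<Longrightarrow> F i j = 0"
  shows "(\<Sum>i\<le>n. \<Sum>j\<le>n. F i j) = (\<Sum>m\<le>n. \<Sum>i\<le>m. F i (m - i))"
proof -
  have "(\<Sum>i\<le>n. \<Sum>j\<le>n. F i j) = (\<Sum>(i, j)\<in>{..n} \<times> {..n}. F i j)"
    by (simp add: sum.cartesian_product)
  also have "\<dots> = (\<Sum>(i, j)\<in>{(i, j). i + j \<le> n}. F i j)"
    by (rule sum.mono_neutral_right) (use assms not_le in fastforce)+
  also have "\<dots> = (\<Sum>m\<le>n. \<Sum>i\<le>m. F i (m - i))"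
    by (rule sum.triangle_reindex_eq)
  finally show ?thesis .
qed

lemma sum_mult_sums_swap:
  fixes c :: "'k \<Rightarrow> 'a::comm_semiring_0"
  shows "(\<Sum>k\<in>K. c k * (\<Sum>i\<in>I. p k i * u i) * (\<Sum>j\<in>J. q k j * v j))
       = (\<Sum>i\<in>I. \<Sum>j\<in>J. (\<Sum>k\<in>K. c k * p k i * q k j) * u i * v j)"
proof -
  have "(\<Sum>k\<in>K. c k * (\<Sum>i\<in>I. p k i * u i) * (\<Sum>j\<in>J. q k j * v j))
      = (\<Sum>k\<in>K. \<Sum>i\<in>I. \<Sum>j\<in>J. c k * p k i * q k j * u i * v j)"
    by (simp add: sum_product sum_distrib_left mult_ac)
  also have "\<dots> = (\<Sum>i\<in>I. \<Sum>j\<in>J. \<Sum>k\<in>K. c k * p k i * q k j * u i * v j)"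
    by (subst sum.swap) (intro sum.cong refl sum.swap)
  also have "\<dots> = (\<Sum>i\<in>I. \<Sum>j\<in>J. (\<Sum>k\<in>K. c k * p k i * q k j) * u i * v j)"
    by (simp only: sum_distrib_right)
  finally show ?thesis .
qed

lemma gfact_basis2_coeffs_unique:
  assumes "\<And>s t. (\<Sum>i\<le>N. \<Sum>j\<le>N. c i j * gfact (s - G) B i * gfact (t - H) B j)
                = (\<Sum>i\<le>N. \<Sum>j\<le>N. d i j * gfact (s - G) B i * gfact (t - H) B j)"
    and "i \<le> N" and "j \<le> N"
  shows "c i j = d i j"
proof -
  have swap: "(\<Sum>j\<le>N. (\<Sum>i\<le>N. e i j * gfact (s - G) B i) * gfact (t - H) B j)
      = (\<Sum>i\<le>N. \<Sum>j\<le>N. e i j * gfact (s - G) B i * gfact (t - H) B j)" for e s t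
    by (simp only: sum_distrib_right) (rule sum.swap)
  have "(\<Sum>i\<le>N. c i j * gfact (s - G) B i) = (\<Sum>i\<le>N. d i j * gfact (s - G) B i)" for s
  proof (rule gfact_basis_coeffs_unique[where c = "\<lambda>j. \<Sum>i\<le>N. c i j * gfact (s - G) B i"
        and d = "\<lambda>j. \<Sum>i\<le>N. d i j * gfact (s - G) B i", OF _ \<open>j \<le> N\<close>])
    fix t
    show "(\<Sum>j\<le>N. (\<Sum>i\<le>N. c i j * gfact (s - G) B i) * gfact (t - H) B j)
        = (\<Sum>j\<le>N. (\<Sum>i\<le>N. d i j * gfact (s - G) B i) * gfact (t - H) B j)"
      unfolding swap by (rule assms(1))
  qed
  then show ?thesis
    by (rule gfact_basis_coeffs_unique[OF _ \<open>i \<le> N\<close>])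
qed

lemma gstirling_convolution:
  assumes "i \<le> n" and "j \<le> n"
  shows "real ((i + j) choose i) * gstirling n (i + j) a B (G + H)
       = (\<Sum>k\<le>n. real (n choose k) * gstirling k i a B G * gstirling (n - k) j a B H)"
proof (rule gfact_basis2_coeffs_unique[where N = n and G = G and H = H and B = B, OF _ assms])
  fix s t
  define S where "S m = gstirling n m a B (G + H)" for m
  define S1 where "S1 k i = gstirling k i a B G" for k i
  define S2 where "S2 k j = gstirling k j a B H" for k j
  let ?g1 = "\<lambda>i. gfact (s - G) B i" and ?g2 = "\<lambda>j. gfact (t - H) B j"
  have "gfact (s + t) a n = (\<Sum>m\<le>n. S m * gfact ((s - G) + (t - H)) B m)"
    unfolding S_def by (subst gfact_eq_sum_gstirling[where G = "G + H"]) (simp_all add: algebra_simps)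
  also have "\<dots> = (\<Sum>m\<le>n. \<Sum>i\<le>m. real (i + (m - i) choose i) * S (i + (m - i)) * ?g1 i * ?g2 (m - i))"
    by (intro sum.cong refl) (simp add: gfact_add sum_distrib_left mult_ac)
  also have "\<dots> = (\<Sum>i\<le>n. \<Sum>j\<le>n. real ((i + j) choose i) * S (i + j) * ?g1 i * ?g2 j)"
    by (rule sum_atMost_square_eq_sum_diagonals[symmetric]) (simp add: S_def gstirling_eq_0)
  finally have by_sum: "gfact (s + t) a n = \<dots>" .
  have "gfact (s + t) a n
      = (\<Sum>k\<le>n. real (n choose k) * (\<Sum>i\<le>n. S1 k i * ?g1 i) * (\<Sum>j\<le>n. S2 (n - k) j * ?g2 j))"
    unfolding gfact_add S1_def S2_def
  proof (intro sum.cong refl)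
    fix k
    assume "k \<in> {..n}"
    then have "gfact s a k = (\<Sum>i\<le>n. gstirling k i a B G * ?g1 i)"
      and "gfact t a (n - k) = (\<Sum>j\<le>n. gstirling (n - k) j a B H * ?g2 j)"
      by (auto intro!: gfact_eq_sum_gstirling)
    then show "real (n choose k) * gfact s a k * gfact t a (n - k)
        = real (n choose k) * (\<Sum>i\<le>n. gstirling k i a B G * ?g1 i)
          * (\<Sum>j\<le>n. gstirling (n - k) j a B H * ?g2 j)"
      by simp
  qed
  also have "\<dots> = (\<Sum>i\<le>n. \<Sum>j\<le>n. (\<Sum>k\<le>n. real (n choose k) * S1 k i * S2 (n - k) j) * ?g1 i * ?g2 j)"
    by (rule sum_mult_sums_swap)
  finally have by_factors: "gfact (s + t) a n = \<dots>" .
  show "(\<Sum>i\<le>n. \<Sum>j\<le>n. real ((i + j) choose i) * gstirling n (i + j) a B (G + H) * ?g1 i * ?g2 j)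
      = (\<Sum>i\<le>n. \<Sum>j\<le>n. (\<Sum>k\<le>n. real (n choose k) * gstirling k i a B G * gstirling (n - k) j a B H)
            * ?g1 i * ?g2 j)"
    using by_sum by_factors by (simp add: S_def S1_def S2_def)
qed

lemma pochhammer_add_mult_power:
  fixes u v c :: "'a::comm_ring_1"
  shows "pochhammer (u + v) m * c ^ m
       = (\<Sum>i\<le>m. of_nat (m choose i) * (pochhammer u i * c ^ i) * (pochhammer v (m - i) * c ^ (m - i)))"
  unfolding pochhammer_binomial_sum sum_distrib_right
proof (intro sum.cong refl)
  fix i
  assume "i \<in> {..m}"
  then have "c ^ m = c ^ i * c ^ (m - i)"
    by (simp flip: power_add)
  then show "of_nat (m choose i) * pochhammer u i * pochhammer v (m - i) * c ^ m
      = of_nat (m choose i) * (pochhammer u i * c ^ i) * (pochhammer v (m - i) * c ^ (m - i))"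
    by (simp add: mult_ac)
qed

lemma Apoly_eq_sum_pochhammer:
  assumes "n \<le> N"
  shows "Apoly l x n a b g
       = (- 1) ^ n * (\<Sum>k\<le>N. pochhammer (real l) k * (- b * x) ^ k * gstirling n k a (- b) (- g))"
proof -
  have "Apoly l x n a b g
      = (- 1) ^ n * (\<Sum>k\<le>n. pochhammer (real l) k * (- b * x) ^ k * gstirling n k a (- b) (- g))"
    unfolding Apoly_def nbinom_def sum_distrib_left
  proof (intro sum.cong refl)
    fix k
    have "(- b * x) ^ k = (- 1) ^ k * b ^ k * x ^ k"
      by (simp flip: power_mult_distrib)
    then show "pochhammer (real l) k / fact k * (- 1) ^ (n + k) * b ^ k * fact k
          * gstirling n k a (- b) (- g) * x ^ k
        = (- 1) ^ n * (pochhammer (real l) k * (- b * x) ^ k * gstirling n k a (- b) (- g))"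
      by (simp add: power_add mult_ac)
  qed
  also have "\<dots> = (- 1) ^ n * (\<Sum>k\<le>N. pochhammer (real l) k * (- b * x) ^ k * gstirling n k a (- b) (- g))"
    by (subst sum.mono_neutral_left[of "{..N}"]) (use assms gstirling_eq_0 in auto)
  finally show ?thesis .
qed

lemma Apoly_convolution:
  "(\<Sum>k\<le>n. real (n choose k) * Apoly l1 x k a b g1 * Apoly l2 x (n - k) a b g2)
   = Apoly (l1 + l2) x n a b (g1 + g2)"
proof -
  define w where "w l i = pochhammer (real l) i * (- b * x) ^ i" for l i
  define S where "S m = gstirling n m a (- b) (- g1 + - g2)" for m
  define S1 where "S1 k i = gstirling k i a (- b) (- g1)" for k i
  define S2 where "S2 k j = gstirling k j a (- b) (- g2)" for k j
  have "real (n choose k) * Apoly l1 x k a b g1 * Apoly l2 x (n - k) a b g2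
      = (- 1) ^ n * (real (n choose k) * (\<Sum>i\<le>n. S1 k i * w l1 i) * (\<Sum>j\<le>n. S2 (n - k) j * w l2 j))"
    if "k \<le> n" for k
  proof -
    from that have "(- 1 :: real) ^ n = (- 1) ^ k * (- 1) ^ (n - k)"
      by (simp flip: power_add)
    with that show ?thesis
      by (simp add: Apoly_eq_sum_pochhammer[where N = n] w_def S1_def S2_def mult_ac)
  qed
  then have "(\<Sum>k\<le>n. real (n choose k) * Apoly l1 x k a b g1 * Apoly l2 x (n - k) a b g2)
      = (\<Sum>k\<le>n. (- 1) ^ n * (real (n choose k) * (\<Sum>i\<le>n. S1 k i * w l1 i)
                                              * (\<Sum>j\<le>n. S2 (n - k) j * w l2 j)))"
    by (intro sum.cong refl) simp
  also have "\<dots> = (- 1) ^ n * (\<Sum>k\<le>n. real (n choose k) * (\<Sum>i\<le>n. S1 k i * w l1 i)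
                                              * (\<Sum>j\<le>n. S2 (n - k) j * w l2 j))"
    by (rule sum_distrib_left[symmetric])
  also have "\<dots> = (- 1) ^ n * (\<Sum>i\<le>n. \<Sum>j\<le>n.
                     (\<Sum>k\<le>n. real (n choose k) * S1 k i * S2 (n - k) j) * w l1 i * w l2 j)"
    by (simp only: sum_mult_sums_swap)
  also have "\<dots> = (- 1) ^ n * (\<Sum>i\<le>n. \<Sum>j\<le>n. real ((i + j) choose i) * S (i + j) * w l1 i * w l2 j)"
    by (intro arg_cong[where f = "\<lambda>s. (- 1) ^ n * s"] sum.cong refl)
      (simp add: S_def S1_def S2_def gstirling_convolution[where G = "- g1" and H = "- g2", symmetric])
  also have "\<dots> = (- 1) ^ n * (\<Sum>m\<le>n. \<Sum>i\<le>m. real (m choose i) * w l1 i * w l2 (m - i) * S m)"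
    by (subst sum_atMost_square_eq_sum_diagonals)
      (auto simp: S_def gstirling_eq_0 mult_ac intro!: sum.cong)
  also have "\<dots> = (- 1) ^ n * (\<Sum>m\<le>n. w (l1 + l2) m * S m)"
    by (simp add: w_def pochhammer_add_mult_power sum_distrib_right)
  also have "\<dots> = Apoly (l1 + l2) x n a b (g1 + g2)"
    by (simp add: Apoly_eq_sum_pochhammer[where N = n] w_def S_def)
  finally show ?thesis .
qed

theorem theorem10:
  fixes a b g1 g2 x :: real and l1 l2 n :: nat
  shows "(\<Sum>k\<le>n. real (n choose k) * Apoly l1 x k a b (a + b + g1)
                                  * Apoly l2 x (n - k) a b g2)
         = Apoly (l1 + l2) x n a b (a + b + g1 + g2)"
  by (rule Apoly_convolution)

end
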